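(* Let $\mathbf G=(\mathcal X,\mathcal E)$ be a directed graph with $\mathcal X=\{1,\dots,n\}$, with edge lengths $l_{ij}\ge0$ for $ij\in\mathcal E$ and $l_{ij}=+\infty$ for $ij\notin\mathcal E$. Fix $N\ge1$ and nodes $x_0,x_N$, and let $\mathcal X^{N+1}(x_0,x_N)$ denote the set of feasible paths $y=(y_0,\dots,y_N)$ with $y_0=x_0$, $y_N=x_N$, assumed nonempty. For $T>0$ let $P_T^*(x)=Z(T)^{-1}\exp(-l(x)/T)$, $Z(T)=\sum_{x}\exp(-l(x)/T)$, be the Boltzmann distribution on $\mathcal X^{N+1}$, where $l(x)=\sum_{t=0}^{N-1}l_{x_tx_{t+1}}$, and let $\mathfrak M^*_T$ be the minimizer of $\mathbb D(P\|P_T^* )$ over probability measures $P$ on $\mathcal X^{N+1}$ with initial marginal $\delta_{x_0}$ and final marginal $\delta_{x_N}$. Let $l_m(x_0,x_N)=\min_{y\in\mathcal X^{N+1}(x_0,x_N)}l(y)$. Then: (i) as $T\searrow0$, $\mathfrak M^*_T$ concentrates on the minimum length paths in $\mathcal X^{N+1}(x_0,x_N)$: if $y\in\mathcal X^{N+1}(x_0,x_N)$ has $l(y)>l_m(x_0,x_N)$, then $\mathfrak M^*_T(y)\to0$ as $T\searrow0$; (ii) as $T\nearrow+\infty$, $\mathfrak M^*_T$ tends to the uniform distribution on $\mathcal X^{N+1}(x_0,x_N)$; (iii) if $\mathcal X^{N+1}(x_0,x_N)$ is not a singleton and $l$ is not constant on it, then for each $\bar L$ with $l_m(x_0,x_N)\le\bar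 L\le\frac{1}{|\mathcal X^{N+1}(x_0,x_N)|}\sum_{y\in\mathcal X^{N+1}(x_0,x_N)}l(y)$ there is a unique $T\in[0,+\infty]$ such that $L(\mathfrak M^*_T)=\bar L$, and this $\mathfrak M^*_T$ solves the problem of maximizing the entropy $S(P)$ over probability measures $P$ on $\mathcal X^{N+1}$ with initial marginal $\delta_{x_0}$, final marginal $\delta_{x_N}$ and $L(P)=\bar L$.
   Context: A path $x=(x_0,\dots,x_N)$ is feasible if $x_tx_{t+1}\in\mathcal E$ for all $t$. $\delta_{x'}$ denotes the point mass at node $x'$. Relative entropy $\mathbb D(P\|Q)=\sum_xP(x)\log\frac{P(x)}{Q(x)}$ (with $+\infty$ if $\mathrm{Supp}P\not\subseteq\mathrm{Supp}Q$, and $0\log0=0$). Average path length of $P$: $L(P)=\sum_x l(x)P(x)$ with $(+\infty)\cdot0=0$. Entropy: $S(P)=-\sum_xP(x)\ln P(x)$. In (iii), $\mathfrak M^*_0$ and $\mathfrak M^*_{+\infty}$ are understood as the limits of $\mathfrak M^*_T$ as $T\searrow0$ and $T\nearrow+\infty$ respectively. *)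

theory Defs
  imports "HOL-Analysis.Analysis"
begin

text \<open>Nodes are elements of a finite type 'a (standing for {1..n}); a path of
  N+1 nodes is a list of length N+1; index t of the list is x_t.\<close>

definition paths :: "nat \<Rightarrow> 'a list set" where
  "paths N = {xs. length xs = Suc N}"

definition feasible :: "('a \<times> 'a) set \<Rightarrow> nat \<Rightarrow> 'a list \<Rightarrow> bool" where
  "feasible E N xs \<longleftrightarrow> length xs = Suc N \<and> (\<forall>t<N. (xs ! t, xs ! Suc t) \<in> E)"

definition rlen :: "('a \<Rightarrow> 'a \<Rightarrow> real) \<Rightarrow> nat \<Rightarrow> 'a list \<Rightarrow> real" where
  "rlen l N xs = (\<Sum>t<N. l (xs ! t) (xs ! Suc t))"

definition plen :: "('a \<times> 'a) set \<Rightarrow> ('a \<Rightarrow> 'a \<Rightarrow> real) \<Rightarrow> nat \<Rightarrow> 'a list \<Rightarrow> ereal" where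
  "plen E l N xs = (if feasible E N xs then ereal (rlen l N xs) else \<infinity>)"

definition fpaths :: "('a \<times> 'a) set \<Rightarrow> nat \<Rightarrow> 'a \<Rightarrow> 'a \<Rightarrow> 'a list set" where
  "fpaths E N x0 xN = {xs. feasible E N xs \<and> xs ! 0 = x0 \<and> xs ! N = xN}"

text \<open>Partition function and Boltzmann distribution (exp(-\<infinity>) = 0).\<close>
definition Zfun :: "('a \<times> 'a) set \<Rightarrow> ('a \<Rightarrow> 'a \<Rightarrow> real) \<Rightarrow> nat \<Rightarrow> real \<Rightarrow> real" where
  "Zfun E l N T = (\<Sum>x\<in>{xs. feasible E N xs}. exp (- rlen l N x / T))"

definition boltz :: "('a \<times> 'a) set \<Rightarrow> ('a \<Rightarrow> 'a \<Rightarrow> real) \<Rightarrow> nat \<Rightarrow> real \<Rightarrow> 'a list \<Rightarrow> real" where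
  "boltz E l N T x = (if feasible E N x then exp (- rlen l N x / T) / Zfun E l N T else 0)"

definition is_prob :: "nat \<Rightarrow> ('a list \<Rightarrow> real) \<Rightarrow> bool" where
  "is_prob N P \<longleftrightarrow> (\<forall>x. 0 \<le> P x) \<and> (\<forall>x. x \<notin> paths N \<longrightarrow> P x = 0)
      \<and> (\<Sum>x\<in>paths N. P x) = 1"

definition marg :: "nat \<Rightarrow> ('a list \<Rightarrow> real) \<Rightarrow> nat \<Rightarrow> 'a \<Rightarrow> real" where
  "marg N P t a = (\<Sum>x\<in>paths N. if x ! t = a then P x else 0)"

definition delta :: "'a \<Rightarrow> 'a \<Rightarrow> real" where
  "delta a b = (if b = a then 1 else 0)"

definition bridge :: "nat \<Rightarrow> 'a \<Rightarrow> 'a \<Rightarrow> ('a list \<Rightarrow> real) set" where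
  "bridge N x0 xN = {P. is_prob N P \<and> (\<forall>a. marg N P 0 a = delta x0 a)
      \<and> (\<forall>a. marg N P N a = delta xN a)}"

definition relent :: "nat \<Rightarrow> ('a list \<Rightarrow> real) \<Rightarrow> ('a list \<Rightarrow> real) \<Rightarrow> ereal" where
  "relent N P Q = (if (\<forall>x\<in>paths N. P x \<noteq> 0 \<longrightarrow> Q x \<noteq> 0)
      then ereal (\<Sum>x\<in>paths N. if P x = 0 then 0 else P x * ln (P x / Q x))
      else \<infinity>)"

text \<open>Average path length, with (+\<infinity>)*0 = 0 (this holds for ereal multiplication).\<close>
definition avglen :: "('a \<times> 'a) set \<Rightarrow> ('a \<Rightarrow> 'a \<Rightarrow> real) \<Rightarrow> nat \<Rightarrow> ('a list \<Rightarrow> real) \<Rightarrow> ereal" where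
  "avglen E l N P = (\<Sum>x\<in>paths N. plen E l N x * ereal (P x))"

definition entropy :: "nat \<Rightarrow> ('a list \<Rightarrow> real) \<Rightarrow> real" where
  "entropy N P = - (\<Sum>x\<in>paths N. if P x = 0 then 0 else P x * ln (P x))"

definition Mext :: "(real \<Rightarrow> 'a list \<Rightarrow> real) \<Rightarrow> ereal \<Rightarrow> 'a list \<Rightarrow> real" where
  "Mext M T y = (if T = 0 then Lim (at_right 0) (\<lambda>s. M s y)
      else if T = \<infinity> then Lim at_top (\<lambda>s. M s y)
      else M (real_of_ereal T) y)"

end

theory Submission
  imports Defs
begin

text \<open>Off the feasible paths the Boltzmann weights vanish, and the marginal constraints force the
  endpoints, so a finite relative entropy confines a bridge to the feasible paths from \<open>x\<^sub>0\<close> to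
  \<open>x\<^sub>N\<close>. There \<open>D(P \<parallel> P\<^sup>*\<^sub>T)\<close> is the Kullback-Leibler divergence from the Gibbs distribution with
  inverse temperature \<open>1/T\<close> plus a constant, so by Gibbs' inequality \<open>\<frak>M\<^sup>*\<^sub>T\<close> is that Gibbs
  distribution. Everything then reduces to the Gibbs family of a non-constant energy on a finite
  set: at \<open>\<beta> = 0\<close> it is uniform, as \<open>\<beta> \<rightarrow> \<infinity>\<close> it becomes uniform on the minimisers, and its mean
  energy is continuous and strictly decreasing in \<open>\<beta>\<close> (a covariance argument), which gives
  existence and uniqueness of the temperature. Finally a Gibbs distribution maximises entropy
  among distributions of the same mean energy, the deficit being a Kullback-Leibler divergence.\<close>

section \<open>Relative entropy and entropy of weights on a finite set\<close>

definition kl_div :: "'b set \<Rightarrow> ('b \<Rightarrow> real) \<Rightarrow> ('b \<Rightarrow> real) \<Rightarrow> real" where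
  "kl_div S p q = (\<Sum>x\<in>S. if p x = 0 then 0 else p x * ln (p x / q x))"

definition entropy_on :: "'b set \<Rightarrow> ('b \<Rightarrow> real) \<Rightarrow> real" where
  "entropy_on S p = - (\<Sum>x\<in>S. if p x = 0 then 0 else p x * ln (p x))"

lemma kl_term_ge:
  fixes p q :: real
  assumes "0 \<le> p" "0 < q"
  shows "p - q \<le> (if p = 0 then 0 else p * ln (p / q))"
proof (cases "p = 0")
  case False
  then have p: "0 < p" using assms by simp
  have "p * ln (q / p) \<le> p * (q / p - 1)"
    using ln_le_minus_one[of "q / p"] p assms by (simp add: mult_left_mono)
  also have "\<dots> = q - p" using p by (simp add: field_simps)
  finally have "p - q \<le> - (p * ln (q / p))" by simp
  moreover have "ln (p / q) = - ln (q / p)" using p assms by (simp add: ln_divide_pos)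
  ultimately show ?thesis using False by simp
qed (use assms in simp)

lemma kl_term_eq_imp_eq:
  fixes p q :: real
  assumes "0 \<le> p" "0 < q" and eq: "(if p = 0 then 0 else p * ln (p / q)) = p - q"
  shows "p = q"
proof (cases "p = 0")
  case False
  then have p: "0 < p" using assms by simp
  have "ln (p / q) = - ln (q / p)" using p assms by (simp add: ln_divide_pos)
  then have "p * ln (q / p) = q - p" using eq False by simp
  also have "\<dots> = p * (q / p - 1)" using p by (simp add: field_simps)
  finally have "ln (q / p) = q / p - 1" using p by simp
  moreover have "0 < q / p" using p assms by simp
  ultimately have "q / p = 1" using ln_eq_minus_one by blast
  then show ?thesis using p by simp
qed (use assms in simp)

lemma kl_div_nonneg:
  assumes "finite S" "\<And>x. x \<in> S \<Longrightarrow> 0 \<le> p x" "\<And>x. x \<in> S \<Longrightarrow> 0 < q x"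
    and "sum p S = sum q S"
  shows "0 \<le> kl_div S p q"
proof -
  have "sum (\<lambda>x. p x - q x) S \<le> kl_div S p q"
    unfolding kl_div_def by (intro sum_mono kl_term_ge assms(2,3))
  then show ?thesis using assms(4) by (simp add: sum_subtractf)
qed

lemma kl_div_le_0_imp_eq:
  assumes fin: "finite S" and p: "\<And>x. x \<in> S \<Longrightarrow> 0 \<le> p x" and q: "\<And>x. x \<in> S \<Longrightarrow> 0 < q x"
    and "sum p S = sum q S" and "kl_div S p q \<le> 0" and "x \<in> S"
  shows "p x = q x"
proof -
  define h where "h x = (if p x = 0 then 0 else p x * ln (p x / q x))" for x
  have d: "0 \<le> h x - (p x - q x)" if "x \<in> S" for x
    using kl_term_ge[OF p[OF that] q[OF that]] unfolding h_def by linarith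
  have "sum (\<lambda>x. h x - (p x - q x)) S = kl_div S p q - (sum p S - sum q S)"
    unfolding kl_div_def h_def by (simp only: sum_subtractf)
  moreover have "0 \<le> sum (\<lambda>x. h x - (p x - q x)) S" using d by (rule sum_nonneg)
  ultimately have "sum (\<lambda>x. h x - (p x - q x)) S = 0" using assms(4,5) by linarith
  then have "h x - (p x - q x) = 0" using sum_nonneg_eq_0_iff[OF fin d] \<open>x \<in> S\<close> by simp
  then show ?thesis
    using kl_term_eq_imp_eq[OF p[OF \<open>x \<in> S\<close>] q[OF \<open>x \<in> S\<close>]] unfolding h_def by linarith
qed

lemma kl_div_self: "kl_div S p p = 0"
  unfolding kl_div_def by (intro sum.neutral) simp

section \<open>Gibbs distributions\<close>

definition partition_fun :: "'b set \<Rightarrow> ('b \<Rightarrow> real) \<Rightarrow> real \<Rightarrow> real" where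
  "partition_fun S f \<beta> = (\<Sum>y\<in>S. exp (- \<beta> * f y))"

definition gibbs :: "'b set \<Rightarrow> ('b \<Rightarrow> real) \<Rightarrow> real \<Rightarrow> 'b \<Rightarrow> real" where
  "gibbs S f \<beta> x = (if x \<in> S then exp (- \<beta> * f x) / partition_fun S f \<beta> else 0)"

definition uniform_on :: "'b set \<Rightarrow> 'b \<Rightarrow> real" where
  "uniform_on S x = (if x \<in> S then 1 / real (card S) else 0)"

definition minimizers :: "'b set \<Rightarrow> ('b \<Rightarrow> real) \<Rightarrow> 'b set" where
  "minimizers S f = {x \<in> S. f x = Min (f ` S)}"

definition mean_energy :: "'b set \<Rightarrow> ('b \<Rightarrow> real) \<Rightarrow> ('b \<Rightarrow> real) \<Rightarrow> real" where
  "mean_energy S f p = (\<Sum>x\<in>S. f x * p x)"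

lemma tendsto_exp_neg_mult_at_top:
  fixes c :: real
  assumes "0 \<le> c"
  shows "((\<lambda>\<beta>. exp (- \<beta> * c)) \<longlongrightarrow> (if c = 0 then 1 else 0)) at_top"
proof (cases "c = 0")
  case False
  then have "filterlim (\<lambda>\<beta>. - c * \<beta>) at_bot at_top"
    using assms by (intro filterlim_tendsto_neg_mult_at_bot[OF tendsto_const] filterlim_ident) auto
  then have "((\<lambda>\<beta>. exp (- c * \<beta>)) \<longlongrightarrow> 0) at_top"
    using exp_at_bot filterlim_compose by blast
  then show ?thesis using False by (simp add: mult.commute)
qed simp

lemma sum_uniform_on: "finite A \<Longrightarrow> A \<noteq> {} \<Longrightarrow> (\<Sum>x\<in>A. uniform_on A x) = 1"
  by (simp add: uniform_on_def)

lemma uniform_on_nonneg: "0 \<le> uniform_on A x"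
  by (simp add: uniform_on_def)

lemma entropy_on_eq_kl_div:
  assumes "\<And>x. x \<in> S \<Longrightarrow> 0 \<le> p x" "\<And>x. x \<in> S \<Longrightarrow> 0 < q x"
  shows "entropy_on S p = - kl_div S p q - (\<Sum>x\<in>S. p x * ln (q x))"
proof -
  have "(if p x = 0 then 0 else p x * ln (p x)) =
      (if p x = 0 then 0 else p x * ln (p x / q x)) + p x * ln (q x)" if "x \<in> S" for x
  proof (cases "p x = 0")
    case False
    then have "0 < p x" using assms(1)[OF that] by simp
    then have "ln (p x) = ln (p x / q x) + ln (q x)"
      using assms(2)[OF that] by (simp add: ln_divide_pos)
    then show ?thesis using False by (simp add: distrib_left)
  qed simp
  then show ?thesis
    unfolding entropy_on_def kl_div_def by (simp add: sum.distrib)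
qed

lemma double_sum_antisym:
  fixes a :: "'b \<Rightarrow> real" and w :: "'b \<Rightarrow> 'b \<Rightarrow> real"
  assumes "\<And>y z. w z y = - w y z"
  shows "2 * (\<Sum>y\<in>S. \<Sum>z\<in>S. a y * w y z) = (\<Sum>y\<in>S. \<Sum>z\<in>S. (a y - a z) * w y z)"
proof -
  have "(\<Sum>y\<in>S. \<Sum>z\<in>S. a z * w y z) = (\<Sum>y\<in>S. \<Sum>z\<in>S. a y * w z y)"
    by (rule sum.swap)
  also have "\<dots> = (\<Sum>y\<in>S. \<Sum>z\<in>S. - (a y * w y z))"
  proof (intro sum.cong refl)
    fix y z show "a y * w z y = - (a y * w y z)" using assms[of z y] by (simp only: mult_minus_right)
  qed
  finally have "(\<Sum>y\<in>S. \<Sum>z\<in>S. a z * w y z) = - (\<Sum>y\<in>S. \<Sum>z\<in>S. a y * w y z)"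
    by (simp only: sum_negf)
  moreover have "(\<Sum>y\<in>S. \<Sum>z\<in>S. (a y - a z) * w y z) =
      (\<Sum>y\<in>S. \<Sum>z\<in>S. a y * w y z) - (\<Sum>y\<in>S. \<Sum>z\<in>S. a z * w y z)"
    by (simp only: left_diff_distrib sum_subtractf)
  ultimately show ?thesis by linarith
qed

lemma exp_cross_diff_pos:
  fixes b1 b2 u v :: real
  assumes "b1 < b2" "u \<noteq> v"
  shows "0 < (u - v) * (exp (- b1 * u) * exp (- b2 * v) - exp (- b1 * v) * exp (- b2 * u))"
proof -
  have e: "exp (- b1 * u) * exp (- b2 * v) - exp (- b1 * v) * exp (- b2 * u) =
      exp (- b1 * u - b2 * v) - exp (- b1 * v - b2 * u)"
    by (simp add: exp_add[symmetric])
  have d: "(- b1 * u - b2 * v) - (- b1 * v - b2 * u) = (b2 - b1) * (u - v)"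
    by (simp add: algebra_simps)
  show ?thesis
  proof (cases "u < v")
    case True
    then have "(b2 - b1) * (u - v) < 0" using assms(1) by (simp add: mult_pos_neg)
    then have "exp (- b1 * u - b2 * v) < exp (- b1 * v - b2 * u)" using d by simp
    then show ?thesis unfolding e using True by (simp add: mult_neg_neg)
  next
    case False
    then have "v < u" using assms(2) by simp
    then have "0 < (b2 - b1) * (u - v)" using assms(1) by simp
    then have "exp (- b1 * v - b2 * u) < exp (- b1 * u - b2 * v)" using d by simp
    then show ?thesis unfolding e using \<open>v < u\<close> by simp
  qed
qed

context
  fixes S :: "'b set" and f :: "'b \<Rightarrow> real"
  assumes finite: "finite S" and nonempty: "S \<noteq> {}"
begin

lemma partition_fun_pos: "0 < partition_fun S f \<beta>"
  unfolding partition_fun_def using finite nonempty by (intro sum_pos) auto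

lemma gibbs_pos: "x \<in> S \<Longrightarrow> 0 < gibbs S f \<beta> x"
  using partition_fun_pos by (simp add: gibbs_def)

lemma gibbs_nonneg: "0 \<le> gibbs S f \<beta> x"
  using partition_fun_pos[of \<beta>] by (simp add: gibbs_def)

lemma sum_gibbs: "(\<Sum>x\<in>S. gibbs S f \<beta> x) = 1"
  using partition_fun_pos[of \<beta>]
  by (simp add: gibbs_def sum_divide_distrib[symmetric] partition_fun_def)

lemma gibbs_zero: "gibbs S f 0 = uniform_on S"
  by (simp add: fun_eq_iff gibbs_def uniform_on_def partition_fun_def)

lemma isCont_gibbs: "isCont (\<lambda>\<beta>. gibbs S f \<beta> x) \<beta>"
proof (cases "x \<in> S")
  case True
  have "isCont (partition_fun S f) \<beta>"
    unfolding partition_fun_def by (intro continuous_intros)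
  then show ?thesis
    using True partition_fun_pos[of \<beta>] unfolding gibbs_def by (auto intro!: continuous_intros)
qed (simp add: gibbs_def)

lemma gibbs_add_const: "gibbs S (\<lambda>x. f x + c) \<beta> = gibbs S f \<beta>"
proof -
  have e: "exp (- \<beta> * (f x + c)) = exp (- \<beta> * f x) * exp (- \<beta> * c)" for x
    by (simp add: exp_add[symmetric] algebra_simps)
  have "partition_fun S (\<lambda>x. f x + c) \<beta> = partition_fun S f \<beta> * exp (- \<beta> * c)"
    by (simp only: partition_fun_def e sum_distrib_right)
  then show ?thesis by (simp only: fun_eq_iff gibbs_def e) simp
qed

lemma Min_le_energy: "x \<in> S \<Longrightarrow> Min (f ` S) \<le> f x"
  using finite by simp

lemma minimizers_subset: "minimizers S f \<subseteq> S"
  by (auto simp: minimizers_def)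

lemma finite_minimizers: "finite (minimizers S f)"
  using finite_subset[OF minimizers_subset finite] .

lemma minimizers_nonempty: "minimizers S f \<noteq> {}"
proof -
  have "Min (f ` S) \<in> f ` S" using finite nonempty by simp
  then show ?thesis by (auto simp: minimizers_def)
qed

lemma gibbs_tendsto_at_top:
  "((\<lambda>\<beta>. gibbs S f \<beta> x) \<longlongrightarrow> uniform_on (minimizers S f) x) at_top"
proof (cases "x \<in> S")
  case True
  define g where "g = (\<lambda>y. f y - Min (f ` S))"
  have "gibbs S f \<beta> = gibbs S g \<beta>" for \<beta>
    using gibbs_add_const[of "- Min (f ` S)" \<beta>] by (simp add: g_def)
  moreover
  have lim: "((\<lambda>\<beta>. exp (- \<beta> * g y)) \<longlongrightarrow> (if y \<in> minimizers S f then 1 else 0)) at_top"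
    if "y \<in> S" for y
    using tendsto_exp_neg_mult_at_top[of "g y"] Min_le_energy[OF that] that
    by (simp add: g_def minimizers_def)
  have "(\<Sum>y\<in>S. if y \<in> minimizers S f then 1 else 0) = real (card (minimizers S f))"
    using finite minimizers_subset by (simp add: sum.If_cases Int_absorb1)
  then have "((\<lambda>\<beta>. \<Sum>y\<in>S. exp (- \<beta> * g y)) \<longlongrightarrow> real (card (minimizers S f))) at_top"
    using tendsto_sum[of S "\<lambda>y \<beta>. exp (- \<beta> * g y)", OF lim] by simp
  then have "((\<lambda>\<beta>. exp (- \<beta> * g x) / (\<Sum>y\<in>S. exp (- \<beta> * g y))) \<longlongrightarrow>
      (if x \<in> minimizers S f then 1 else 0) / real (card (minimizers S f))) at_top"
    using lim[OF True] finite_minimizers minimizers_nonempty by (intro tendsto_divide) auto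
  moreover have "(if x \<in> minimizers S f then 1 else 0) / real (card (minimizers S f)) =
      uniform_on (minimizers S f) x"
    by (simp add: uniform_on_def)
  ultimately show ?thesis using True by (simp add: gibbs_def partition_fun_def)
qed (use minimizers_subset in \<open>auto simp: gibbs_def uniform_on_def\<close>)

lemma Min_le_mean_energy:
  assumes "\<And>x. x \<in> S \<Longrightarrow> 0 \<le> p x" "sum p S = 1"
  shows "Min (f ` S) \<le> mean_energy S f p"
proof -
  have "Min (f ` S) = (\<Sum>x\<in>S. Min (f ` S) * p x)"
    using assms(2) by (simp add: sum_distrib_left[symmetric])
  also have "\<dots> \<le> mean_energy S f p"
    unfolding mean_energy_def by (intro sum_mono mult_right_mono Min_le_energy assms(1))
  finally show ?thesis .
qed

lemma mean_energy_eq_Min_imp_zero: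
  assumes p: "\<And>x. x \<in> S \<Longrightarrow> 0 \<le> p x" and "sum p S = 1" "mean_energy S f p = Min (f ` S)"
    and x: "x \<in> S" "x \<notin> minimizers S f"
  shows "p x = 0"
proof -
  have nonneg: "0 \<le> (f y - Min (f ` S)) * p y" if "y \<in> S" for y
    using Min_le_energy[OF that] p[OF that] by simp
  have "(\<Sum>y\<in>S. (f y - Min (f ` S)) * p y) = mean_energy S f p - Min (f ` S) * sum p S"
    by (simp add: mean_energy_def left_diff_distrib sum_subtractf sum_distrib_left)
  then have "(\<Sum>y\<in>S. (f y - Min (f ` S)) * p y) = 0" using assms(2,3) by simp
  then have "(f x - Min (f ` S)) * p x = 0" using sum_nonneg_eq_0_iff[OF finite nonneg] x by simp
  moreover have "f x \<noteq> Min (f ` S)" using x by (simp add: minimizers_def)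
  ultimately show ?thesis by simp
qed

lemma mean_energy_gibbs_gt_Min:
  assumes "\<exists>y\<in>S. \<exists>z\<in>S. f y \<noteq> f z"
  shows "Min (f ` S) < mean_energy S f (gibbs S f \<beta>)"
proof -
  obtain y z where "y \<in> S" "z \<in> S" "f y \<noteq> f z" using assms by blast
  then obtain x where x: "x \<in> S" "x \<notin> minimizers S f"
    unfolding minimizers_def by (metis (mono_tags, lifting) mem_Collect_eq)
  have "Min (f ` S) \<le> mean_energy S f (gibbs S f \<beta>)"
    using gibbs_nonneg sum_gibbs by (rule Min_le_mean_energy)
  moreover have "mean_energy S f (gibbs S f \<beta>) \<noteq> Min (f ` S)"
    using mean_energy_eq_Min_imp_zero[OF gibbs_nonneg sum_gibbs _ x] gibbs_pos[OF x(1), of \<beta>] by auto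
  ultimately show ?thesis by simp
qed

lemma sum_uniform_on_minimizers: "(\<Sum>x\<in>S. uniform_on (minimizers S f) x) = 1"
proof -
  have "(\<Sum>x\<in>S. uniform_on (minimizers S f) x) = (\<Sum>x\<in>minimizers S f. uniform_on (minimizers S f) x)"
    using minimizers_subset by (intro sum.mono_neutral_right finite) (auto simp: uniform_on_def)
  then show ?thesis using sum_uniform_on[OF finite_minimizers minimizers_nonempty] by simp
qed

lemma mean_energy_uniform_on_minimizers:
  "mean_energy S f (uniform_on (minimizers S f)) = Min (f ` S)"
proof -
  have "mean_energy S f (uniform_on (minimizers S f)) =
      (\<Sum>x\<in>S. Min (f ` S) * uniform_on (minimizers S f) x)"
    unfolding mean_energy_def by (intro sum.cong) (auto simp: uniform_on_def minimizers_def)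
  then show ?thesis using sum_uniform_on_minimizers by (simp add: sum_distrib_left[symmetric])
qed

lemma mean_energy_gibbs_zero: "mean_energy S f (gibbs S f 0) = (\<Sum>x\<in>S. f x) / real (card S)"
  by (simp add: gibbs_zero mean_energy_def uniform_on_def sum_divide_distrib)

lemma isCont_mean_energy_gibbs: "isCont (\<lambda>\<beta>. mean_energy S f (gibbs S f \<beta>)) \<beta>"
  unfolding mean_energy_def by (intro continuous_intros isCont_gibbs)

lemma mean_energy_gibbs_tendsto_at_top:
  "((\<lambda>\<beta>. mean_energy S f (gibbs S f \<beta>)) \<longlongrightarrow> Min (f ` S)) at_top"
proof -
  have "((\<lambda>\<beta>. mean_energy S f (gibbs S f \<beta>)) \<longlongrightarrow> mean_energy S f (uniform_on (minimizers S f))) at_top"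
    unfolding mean_energy_def by (intro tendsto_intros gibbs_tendsto_at_top)
  then show ?thesis by (simp only: mean_energy_uniform_on_minimizers)
qed

text \<open>With \<open>A = exp (-\<beta>\<^sub>1 f)\<close> and \<open>B = exp (-\<beta>\<^sub>2 f)\<close>, the difference of the mean energies is
  \<open>\<Sum>\<Sum> (f y - f z) (A y B z - A z B y) / (2 Z\<^sub>1 Z\<^sub>2)\<close>, and every summand is nonnegative.\<close>

lemma mean_energy_gibbs_strict_decreasing:
  assumes nonconst: "\<exists>y\<in>S. \<exists>z\<in>S. f y \<noteq> f z" and "\<beta>\<^sub>1 < \<beta>\<^sub>2"
  shows "mean_energy S f (gibbs S f \<beta>\<^sub>2) < mean_energy S f (gibbs S f \<beta>\<^sub>1)"
proof -
  define A where "A y = exp (- \<beta>\<^sub>1 * f y)" for y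
  define B where "B y = exp (- \<beta>\<^sub>2 * f y)" for y
  define w where "w y z = A y * B z - A z * B y" for y z
  have mean: "mean_energy S f (gibbs S f \<beta>) = (\<Sum>y\<in>S. f y * exp (- \<beta> * f y)) / partition_fun S f \<beta>"
    for \<beta> by (simp add: mean_energy_def gibbs_def sum_divide_distrib)
  have "(\<Sum>y\<in>S. \<Sum>z\<in>S. f y * w y z) =
      (\<Sum>y\<in>S. f y * A y) * partition_fun S f \<beta>\<^sub>2 - (\<Sum>y\<in>S. f y * B y) * partition_fun S f \<beta>\<^sub>1"
    by (simp add: w_def A_def B_def partition_fun_def algebra_simps sum_subtractf
        sum_distrib_left sum_distrib_right)
  then have diff: "mean_energy S f (gibbs S f \<beta>\<^sub>1) - mean_energy S f (gibbs S f \<beta>\<^sub>2) =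
      (\<Sum>y\<in>S. \<Sum>z\<in>S. f y * w y z) / (partition_fun S f \<beta>\<^sub>1 * partition_fun S f \<beta>\<^sub>2)"
    using partition_fun_pos[of \<beta>\<^sub>1] partition_fun_pos[of \<beta>\<^sub>2]
    by (simp add: mean A_def B_def field_simps)
  have w_pos: "0 < (f y - f z) * w y z" if "f y \<noteq> f z" for y z
    using exp_cross_diff_pos[OF \<open>\<beta>\<^sub>1 < \<beta>\<^sub>2\<close> that] by (simp add: w_def A_def B_def)
  have w_nonneg: "0 \<le> (f y - f z) * w y z" for y z
    using w_pos[of y z] by (cases "f y = f z") auto
  obtain y z where yz: "y \<in> S" "z \<in> S" "f y \<noteq> f z" using nonconst by blast
  have "0 < (\<Sum>y\<in>S. \<Sum>z\<in>S. (f y - f z) * w y z)"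
    using yz w_pos w_nonneg
    by (intro sum_pos2[OF finite yz(1)] sum_pos2[OF finite yz(2)] sum_nonneg) auto
  also have "\<dots> = 2 * (\<Sum>y\<in>S. \<Sum>z\<in>S. f y * w y z)"
    by (rule double_sum_antisym[symmetric]) (simp add: w_def)
  finally have "0 < (\<Sum>y\<in>S. \<Sum>z\<in>S. f y * w y z) / (partition_fun S f \<beta>\<^sub>1 * partition_fun S f \<beta>\<^sub>2)"
    using partition_fun_pos[of \<beta>\<^sub>1] partition_fun_pos[of \<beta>\<^sub>2] by simp
  then show ?thesis using diff by simp
qed

text \<open>If the mean energies agree, the entropy deficit of \<open>p\<close> is exactly \<open>kl_div S p (gibbs S f \<beta>)\<close>.\<close>

lemma entropy_on_le_gibbs:
  assumes p: "\<And>x. x \<in> S \<Longrightarrow> 0 \<le> p x" and "sum p S = 1"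
    and mean: "mean_energy S f p = mean_energy S f (gibbs S f \<beta>)"
  shows "entropy_on S p \<le> entropy_on S (gibbs S f \<beta>)"
proof -
  let ?q = "gibbs S f \<beta>" and ?Z = "partition_fun S f \<beta>"
  have ln_q: "ln (?q x) = - \<beta> * f x - ln ?Z" if "x \<in> S" for x
    using that partition_fun_pos[of \<beta>] by (simp add: gibbs_def ln_divide_pos)
  have cross: "(\<Sum>x\<in>S. r x * ln (?q x)) = - \<beta> * mean_energy S f r - ln ?Z"
    if "sum r S = 1" for r
  proof -
    have "(\<Sum>x\<in>S. r x * ln (?q x)) = (\<Sum>x\<in>S. - \<beta> * (f x * r x) - ln ?Z * r x)"
      by (intro sum.cong) (simp_all add: ln_q algebra_simps)
    then show ?thesis
      using that by (simp add: sum_subtractf sum_negf sum_distrib_left[symmetric] mean_energy_def)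
  qed
  have "0 \<le> kl_div S p ?q"
    using assms(2) sum_gibbs by (intro kl_div_nonneg finite p gibbs_pos) simp_all
  moreover have "entropy_on S p = - kl_div S p ?q - (\<Sum>x\<in>S. p x * ln (?q x))"
    by (rule entropy_on_eq_kl_div) (simp_all add: p gibbs_pos)
  moreover have "entropy_on S ?q = - (\<Sum>x\<in>S. ?q x * ln (?q x))"
    using entropy_on_eq_kl_div[of S ?q ?q] gibbs_nonneg gibbs_pos by (simp add: kl_div_self)
  ultimately show ?thesis using cross[OF assms(2)] cross[OF sum_gibbs] mean by simp
qed

end

lemma entropy_on_le_uniform_on:
  assumes "finite A" "A \<noteq> {}" "\<And>x. x \<in> A \<Longrightarrow> 0 \<le> p x" "sum p A = 1"
  shows "entropy_on A p \<le> entropy_on A (uniform_on A)"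
  using entropy_on_le_gibbs[OF assms, of "\<lambda>_. 0" 0] gibbs_zero[OF assms(1,2)]
  by (simp add: mean_energy_def)

lemma entropy_on_le_uniform_on_minimizers:
  assumes fin: "finite S" and ne: "S \<noteq> {}"
    and p: "\<And>x. x \<in> S \<Longrightarrow> 0 \<le> p x" and "sum p S = 1" "mean_energy S f p = Min (f ` S)"
  shows "entropy_on S p \<le> entropy_on S (uniform_on (minimizers S f))"
proof -
  let ?A = "minimizers S f"
  note A = finite_minimizers[OF fin ne, of f] minimizers_nonempty[OF fin ne, of f]
    minimizers_subset[OF fin ne, of f]
  have p0: "p x = 0" if "x \<in> S - ?A" for x
    using mean_energy_eq_Min_imp_zero[OF fin ne p assms(4,5)] that by simp
  have restrict: "entropy_on S r = entropy_on ?A r" if "\<And>x. x \<in> S - ?A \<Longrightarrow> r x = 0" for r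
    unfolding entropy_on_def using that by (subst sum.mono_neutral_right[OF fin A(3)]) auto
  have "sum p S = sum p ?A"
    using p0 by (intro sum.mono_neutral_right[OF fin A(3)]) blast
  then have "sum p ?A = 1" using assms(4) by simp
  then have "entropy_on ?A p \<le> entropy_on ?A (uniform_on ?A)"
    using A p by (intro entropy_on_le_uniform_on) auto
  moreover have "entropy_on S p = entropy_on ?A p" using p0 by (rule restrict)
  moreover have "entropy_on S (uniform_on ?A) = entropy_on ?A (uniform_on ?A)"
    by (rule restrict) (simp add: uniform_on_def)
  ultimately show ?thesis by simp
qed

section \<open>Temperature\<close>

text \<open>The Gibbs family reparametrised by the temperature \<open>T = 1/\<beta>\<close>, extended to \<open>T = 0\<close> and
  \<open>T = \<infinity>\<close> by its limits (see \<open>tendsto_zero_temperature\<close> and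
  \<open>tendsto_infinite_temperature\<close>).\<close>

definition gibbs_temp :: "'b set \<Rightarrow> ('b \<Rightarrow> real) \<Rightarrow> ereal \<Rightarrow> 'b \<Rightarrow> real" where
  "gibbs_temp S f T =
    (if T = 0 then uniform_on (minimizers S f)
     else if T = \<infinity> then uniform_on S
     else gibbs S f (1 / real_of_ereal T))"

lemma ereal_nonneg_cases:
  fixes T :: ereal
  assumes "0 \<le> T"
  obtains "T = 0" | "T = \<infinity>" | t where "0 < t" "T = ereal t"
  using assms by (cases T) (force simp: zero_ereal_def)+

context
  fixes S :: "'b set" and f :: "'b \<Rightarrow> real"
  assumes finite: "finite S" and nonempty: "S \<noteq> {}"
begin

lemma gibbs_temp_zero: "gibbs_temp S f 0 = uniform_on (minimizers S f)"
  by (simp add: gibbs_temp_def)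

lemma gibbs_temp_ereal: "0 < t \<Longrightarrow> gibbs_temp S f (ereal t) = gibbs S f (1 / t)"
  by (simp add: gibbs_temp_def zero_ereal_def)

lemma gibbs_temp_infinity: "gibbs_temp S f \<infinity> = gibbs S f 0"
  using gibbs_zero[OF finite nonempty] by (simp add: gibbs_temp_def)

lemma gibbs_temp_nonneg: "0 \<le> gibbs_temp S f T x"
  using gibbs_nonneg[OF finite nonempty] by (simp add: gibbs_temp_def uniform_on_nonneg)

lemma gibbs_temp_outside: "x \<notin> S \<Longrightarrow> gibbs_temp S f T x = 0"
  using minimizers_subset[OF finite nonempty] by (auto simp: gibbs_temp_def gibbs_def uniform_on_def)

lemma sum_gibbs_temp: "(\<Sum>x\<in>S. gibbs_temp S f T x) = 1"
  using sum_gibbs[OF finite nonempty] sum_uniform_on[OF finite nonempty]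
    sum_uniform_on_minimizers[OF finite nonempty]
  by (simp add: gibbs_temp_def)

context
  fixes M :: "real \<Rightarrow> 'b \<Rightarrow> real"
  assumes M: "\<And>T. 0 < T \<Longrightarrow> M T = gibbs S f (1 / T)"
begin

lemma tendsto_zero_temperature:
  "((\<lambda>T. M T x) \<longlongrightarrow> uniform_on (minimizers S f) x) (at_right 0)"
proof -
  have "((\<lambda>T. gibbs S f (inverse T) x) \<longlongrightarrow> uniform_on (minimizers S f) x) (at_right 0)"
    using gibbs_tendsto_at_top[OF finite nonempty] filterlim_inverse_at_top_right
    by (rule filterlim_compose)
  moreover have "eventually (\<lambda>T. gibbs S f (inverse T) x = M T x) (at_right 0)"
    using eventually_at_right_less[of "0::real"] by eventually_elim (simp add: M inverse_eq_divide)
  ultimately show ?thesis by (rule tendsto_cong[THEN iffD1, rotated])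
qed

lemma tendsto_infinite_temperature: "((\<lambda>T. M T x) \<longlongrightarrow> uniform_on S x) at_top"
proof -
  have "((\<lambda>T. gibbs S f (inverse T) x) \<longlongrightarrow> gibbs S f 0 x) at_top"
    using isCont_gibbs[OF finite nonempty] tendsto_inverse_0_at_top[OF filterlim_ident]
    by (rule isCont_tendsto_compose)
  moreover have "eventually (\<lambda>T. gibbs S f (inverse T) x = M T x) at_top"
    using eventually_gt_at_top[of "0::real"] by eventually_elim (simp add: M inverse_eq_divide)
  ultimately show ?thesis
    using gibbs_zero[OF finite nonempty] by (simp add: tendsto_cong[THEN iffD1, rotated])
qed

end

lemma mean_energy_gibbs_temp_strict_mono:
  assumes nonconst: "\<exists>y\<in>S. \<exists>z\<in>S. f y \<noteq> f z" and "0 \<le> T\<^sub>1" "T\<^sub>1 < T\<^sub>2"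
  shows "mean_energy S f (gibbs_temp S f T\<^sub>1) < mean_energy S f (gibbs_temp S f T\<^sub>2)"
proof -
  note gt_Min = mean_energy_gibbs_gt_Min[OF finite nonempty nonconst]
  note decreasing = mean_energy_gibbs_strict_decreasing[OF finite nonempty nonconst]
  have "0 \<le> T\<^sub>2" using assms(2,3) by simp
  from \<open>0 \<le> T\<^sub>1\<close> show ?thesis
  proof (cases rule: ereal_nonneg_cases)
    case 1
    with \<open>0 \<le> T\<^sub>2\<close> \<open>T\<^sub>1 < T\<^sub>2\<close> show ?thesis
      by (cases rule: ereal_nonneg_cases)
        (simp_all add: gibbs_temp_zero gibbs_temp_ereal
          gibbs_temp_infinity gt_Min mean_energy_uniform_on_minimizers[OF finite nonempty])
  next
    case 2
    with \<open>T\<^sub>1 < T\<^sub>2\<close> show ?thesis by simp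
  next
    case (3 t\<^sub>1)
    with \<open>0 \<le> T\<^sub>2\<close> \<open>T\<^sub>1 < T\<^sub>2\<close> show ?thesis
      by (cases rule: ereal_nonneg_cases)
        (auto simp: gibbs_temp_ereal gibbs_temp_infinity
          intro!: decreasing frac_less2)
  qed
qed

lemma mean_energy_gibbs_temp_inj:
  assumes nonconst: "\<exists>y\<in>S. \<exists>z\<in>S. f y \<noteq> f z" and "0 \<le> T\<^sub>1" "0 \<le> T\<^sub>2"
    and "mean_energy S f (gibbs_temp S f T\<^sub>1) = mean_energy S f (gibbs_temp S f T\<^sub>2)"
  shows "T\<^sub>1 = T\<^sub>2"
  using mean_energy_gibbs_temp_strict_mono[OF nonconst] assms(2-4)
  by (metis less_irrefl linorder_neqE)

lemma mean_energy_gibbs_temp_surj: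
  assumes "Min (f ` S) \<le> L" "L \<le> (\<Sum>x\<in>S. f x) / real (card S)"
  shows "\<exists>T\<ge>0. mean_energy S f (gibbs_temp S f T) = L"
proof -
  let ?m = "\<lambda>\<beta>. mean_energy S f (gibbs S f \<beta>)"
  consider "L = Min (f ` S)" | "L = ?m 0" | "Min (f ` S) < L" "L < ?m 0"
    using assms mean_energy_gibbs_zero[OF finite nonempty, of f] by linarith
  then show ?thesis
  proof cases
    case 1
    then show ?thesis
      by (intro exI[of _ 0]) (simp add: gibbs_temp_zero mean_energy_uniform_on_minimizers[OF finite nonempty])
  next
    case 2
    then show ?thesis by (intro exI[of _ \<infinity>]) (simp add: gibbs_temp_infinity)
  next
    case 3
    have "eventually (\<lambda>\<beta>. ?m \<beta> < L) at_top"
      using order_tendstoD(2)[OF mean_energy_gibbs_tendsto_at_top[OF finite nonempty] 3(1)] .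
    then obtain b where "\<And>\<beta>. b \<le> \<beta> \<Longrightarrow> ?m \<beta> < L"
      unfolding eventually_at_top_linorder by blast
    then have b: "?m (max b 0) < L" "0 \<le> max b 0" by simp_all
    have "continuous_on {0..max b 0} ?m"
      using isCont_mean_energy_gibbs[OF finite nonempty] by (intro continuous_at_imp_continuous_on) blast
    then obtain \<beta> where "0 \<le> \<beta>" "?m \<beta> = L"
      using IVT2'[of ?m "max b 0" L 0] b 3(2) by auto
    moreover have "\<beta> \<noteq> 0" using \<open>?m \<beta> = L\<close> 3(2) by auto
    ultimately show ?thesis
      by (intro exI[of _ "ereal (1 / \<beta>)"]) (simp add: gibbs_temp_ereal)
  qed
qed

lemma entropy_on_le_gibbs_temp:
  assumes "0 \<le> T" and p: "\<And>x. x \<in> S \<Longrightarrow> 0 \<le> p x" and "sum p S = 1"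
    and mean: "mean_energy S f p = mean_energy S f (gibbs_temp S f T)"
  shows "entropy_on S p \<le> entropy_on S (gibbs_temp S f T)"
  using \<open>0 \<le> T\<close>
proof (cases rule: ereal_nonneg_cases)
  case 1
  then show ?thesis
    using mean entropy_on_le_uniform_on_minimizers[OF finite nonempty p \<open>sum p S = 1\<close>]
    by (simp add: gibbs_temp_zero mean_energy_uniform_on_minimizers[OF finite nonempty])
next
  case 2
  then show ?thesis
    using mean entropy_on_le_gibbs[OF finite nonempty p \<open>sum p S = 1\<close>]
    by (simp add: gibbs_temp_infinity)
next
  case (3 t)
  then show ?thesis
    using mean entropy_on_le_gibbs[OF finite nonempty p \<open>sum p S = 1\<close>]
    by (simp add: gibbs_temp_ereal)
qed

end

lemma Mext_eq_gibbs_temp: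
  fixes S :: "'a list set"
  assumes fin: "finite S" and ne: "S \<noteq> {}" and M: "\<And>T. 0 < T \<Longrightarrow> M T = gibbs S f (1 / T)"
    and "0 \<le> T"
  shows "Mext M T = gibbs_temp S f T"
  using \<open>0 \<le> T\<close>
proof (cases rule: ereal_nonneg_cases)
  case 1
  then show ?thesis
    using tendsto_Lim[OF trivial_limit_at_right_real tendsto_zero_temperature[OF fin ne M]]
    by (simp add: fun_eq_iff Mext_def gibbs_temp_zero[OF fin ne])
next
  case 2
  then show ?thesis
    using tendsto_Lim[OF trivial_limit_at_top_linorder tendsto_infinite_temperature[OF fin ne M]]
    by (simp add: fun_eq_iff Mext_def gibbs_temp_def)
next
  case (3 t)
  then show ?thesis by (simp add: fun_eq_iff Mext_def M gibbs_temp_ereal[OF fin ne])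
qed

section \<open>Bridges on the path space\<close>

lemma finite_paths: "finite (paths N :: 'a::finite list set)"
  using finite_lists_length_eq[of "UNIV :: 'a set" "Suc N"] by (simp add: paths_def)

lemma fpaths_subset_paths: "fpaths E N x0 xN \<subseteq> paths N"
  by (auto simp: fpaths_def feasible_def paths_def)

lemma finite_fpaths: "finite (fpaths E N x0 xN :: 'a::finite list set)"
  using finite_subset[OF fpaths_subset_paths finite_paths] .

lemma sum_paths_eq_sum_fpaths:
  fixes g :: "'a::finite list \<Rightarrow> _"
  assumes "\<And>x. x \<notin> fpaths E N x0 xN \<Longrightarrow> g x = 0"
  shows "(\<Sum>x\<in>paths N. g x) = (\<Sum>x\<in>fpaths E N x0 xN. g x)"
  using assms by (intro sum.mono_neutral_right finite_paths fpaths_subset_paths) auto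

lemma bridgeI:
  fixes P :: "'a::finite list \<Rightarrow> real"
  assumes "\<And>x. 0 \<le> P x" "\<And>x. x \<notin> fpaths E N x0 xN \<Longrightarrow> P x = 0"
    and "(\<Sum>x\<in>fpaths E N x0 xN. P x) = 1"
  shows "P \<in> bridge N x0 xN"
proof -
  have marg: "marg N P t a = (if b = a then 1 else 0)"
    if "\<And>x. x \<in> fpaths E N x0 xN \<Longrightarrow> x ! t = b" for t a b
  proof -
    have "marg N P t a = (\<Sum>x\<in>fpaths E N x0 xN. if x ! t = a then P x else 0)"
      unfolding marg_def using assms(2) by (intro sum_paths_eq_sum_fpaths) simp
    also have "\<dots> = (\<Sum>x\<in>fpaths E N x0 xN. if b = a then P x else 0)"
      using that by (intro sum.cong) auto
    finally show ?thesis using assms(3) by simp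
  qed
  have "is_prob N P"
    using assms fpaths_subset_paths[of E N x0 xN] sum_paths_eq_sum_fpaths[where g = P, OF assms(2)]
    by (auto simp: is_prob_def)
  then show ?thesis
    unfolding bridge_def delta_def using marg[of 0 x0] marg[of N xN] by (auto simp: fpaths_def)
qed

lemma bridge_nonneg: "P \<in> bridge N x0 xN \<Longrightarrow> 0 \<le> P x"
  by (simp add: bridge_def is_prob_def)

lemma sum_fpaths_bridge:
  fixes P :: "'a::finite list \<Rightarrow> real"
  assumes "P \<in> bridge N x0 xN" "\<And>x. x \<notin> fpaths E N x0 xN \<Longrightarrow> P x = 0"
  shows "(\<Sum>x\<in>fpaths E N x0 xN. P x) = 1"
  using assms sum_paths_eq_sum_fpaths[where g = P, OF assms(2)] by (simp add: bridge_def is_prob_def)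

lemma bridge_endpoints:
  fixes P :: "'a::finite list \<Rightarrow> real"
  assumes P: "P \<in> bridge N x0 xN" and "P x \<noteq> 0"
  shows "x \<in> paths N" "x ! 0 = x0" "x ! N = xN"
proof -
  have x: "x \<in> paths N" using assms by (auto simp: bridge_def is_prob_def)
  have endpoint: "x ! t = a" if marg: "\<And>b. marg N P t b = delta a b" for t a
  proof (rule ccontr)
    assume "x ! t \<noteq> a"
    have "(if x ! t = x ! t then P x else 0) \<le> (\<Sum>z\<in>paths N. if z ! t = x ! t then P z else 0)"
      by (rule member_le_sum[OF x]) (simp_all add: bridge_nonneg[OF P] finite_paths)
    then have "P x \<le> (\<Sum>z\<in>paths N. if z ! t = x ! t then P z else 0)" by simp
    also have "\<dots> = 0"
      using marg[of "x ! t"] \<open>x ! t \<noteq> a\<close> by (simp add: marg_def delta_def)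
    finally show False using bridge_nonneg[OF P, of x] \<open>P x \<noteq> 0\<close> by simp
  qed
  show "x \<in> paths N" by (rule x)
  show "x ! 0 = x0" "x ! N = xN" using P by (auto simp: bridge_def intro: endpoint)
qed

locale path_bridge =
  fixes E :: "('a::finite \<times> 'a) set" and l :: "'a \<Rightarrow> 'a \<Rightarrow> real"
    and N :: nat and x0 xN :: 'a
  assumes fpaths_nonempty: "fpaths E N x0 xN \<noteq> {}"
begin

abbreviation "F \<equiv> fpaths E N x0 xN"
abbreviation "len \<equiv> rlen l N"

lemma finite_F: "finite F"
  by (rule finite_fpaths)

lemma Zfun_pos: "0 < Zfun E l N T"
proof -
  obtain y where "y \<in> F" using fpaths_nonempty by blast
  moreover have "finite {xs. feasible E N xs}"
    by (rule finite_subset[OF _ finite_paths]) (auto simp: feasible_def paths_def)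
  ultimately show ?thesis
    unfolding Zfun_def by (intro sum_pos2[of _ y]) (auto simp: fpaths_def)
qed

lemma gibbs_in_bridge: "gibbs F len \<beta> \<in> bridge N x0 xN"
  by (rule bridgeI[OF gibbs_nonneg[OF finite_F fpaths_nonempty] _ sum_gibbs[OF finite_F fpaths_nonempty]])
    (simp add: gibbs_def)

lemma gibbs_temp_in_bridge: "gibbs_temp F len T \<in> bridge N x0 xN"
  by (rule bridgeI[OF gibbs_temp_nonneg[OF finite_F fpaths_nonempty]
        gibbs_temp_outside[OF finite_F fpaths_nonempty] sum_gibbs_temp[OF finite_F fpaths_nonempty]])

lemma relent_boltz_eq_kl_div:
  assumes "0 < T" and R: "R \<in> bridge N x0 xN" "\<And>x. x \<notin> F \<Longrightarrow> R x = 0"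
  shows "relent N R (boltz E l N T) =
    ereal (kl_div F R (gibbs F len (1 / T)) + ln (Zfun E l N T / partition_fun F len (1 / T)))"
proof -
  let ?B = "boltz E l N T" and ?q = "gibbs F len (1 / T)"
  let ?c = "Zfun E l N T / partition_fun F len (1 / T)"
  have c: "0 < ?c" using Zfun_pos partition_fun_pos[OF finite_F fpaths_nonempty] by simp
  have B: "?B x = ?q x / ?c" if "x \<in> F" for x
    using that partition_fun_pos[OF finite_F fpaths_nonempty, of len "1 / T"]
    by (simp add: boltz_def gibbs_def fpaths_def)
  have q: "0 < ?q x" if "x \<in> F" for x
    using gibbs_pos[OF finite_F fpaths_nonempty that] .
  have pointwise: "(if R x = 0 then 0 else R x * ln (R x / ?B x)) =
      (if R x = 0 then 0 else R x * ln (R x / ?q x)) + R x * ln ?c" if "x \<in> F" for x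
  proof (cases "R x = 0")
    case False
    then have "0 < R x / ?q x" using bridge_nonneg[OF R(1), of x] q[OF that] by simp
    then have "ln (R x / ?B x) = ln (R x / ?q x) + ln ?c"
      using B[OF that] c q[OF that] by (simp add: ln_mult_pos[symmetric] field_simps)
    then show ?thesis using False by (simp add: distrib_left)
  qed simp
  have "(\<Sum>x\<in>paths N. if R x = 0 then 0 else R x * ln (R x / ?B x))
      = (\<Sum>x\<in>F. if R x = 0 then 0 else R x * ln (R x / ?B x))"
    using R(2) by (intro sum_paths_eq_sum_fpaths) simp
  also have "\<dots> = (\<Sum>x\<in>F. (if R x = 0 then 0 else R x * ln (R x / ?q x)) + R x * ln ?c)"
    using pointwise by (rule sum.cong[OF refl])
  also have "\<dots> = kl_div F R ?q + ln ?c"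
    using sum_fpaths_bridge[OF R] by (simp add: kl_div_def sum.distrib sum_distrib_right[symmetric])
  moreover have "?B x \<noteq> 0" if "R x \<noteq> 0" for x
  proof -
    have "x \<in> F" using R(2) that by blast
    then have "0 < ?B x" using B q c by (metis divide_pos_pos)
    then show ?thesis by simp
  qed
  ultimately show ?thesis by (simp add: relent_def)
qed

lemma relent_minimizer_eq_gibbs:
  assumes "0 < T" and P: "P \<in> bridge N x0 xN"
    and min: "\<And>Q. Q \<in> bridge N x0 xN \<Longrightarrow> relent N P (boltz E l N T) \<le> relent N Q (boltz E l N T)"
  shows "P = gibbs F len (1 / T)"
proof -
  let ?B = "boltz E l N T" and ?q = "gibbs F len (1 / T)"
  let ?K = "ln (Zfun E l N T / partition_fun F len (1 / T))"
  have q_outside: "?q x = 0" if "x \<notin> F" for x using that by (simp add: gibbs_def)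
  have "relent N ?q ?B = ereal ?K"
    using relent_boltz_eq_kl_div[OF \<open>0 < T\<close> gibbs_in_bridge q_outside] by (simp add: kl_div_self)
  then have le: "relent N P ?B \<le> ereal ?K" using min[OF gibbs_in_bridge, of "1 / T"] by simp
  have support: "\<forall>x\<in>paths N. P x \<noteq> 0 \<longrightarrow> ?B x \<noteq> 0"
  proof (rule ccontr)
    assume "\<not> (\<forall>x\<in>paths N. P x \<noteq> 0 \<longrightarrow> ?B x \<noteq> 0)"
    then have "relent N P ?B = \<infinity>" by (simp add: relent_def)
    then show False using le by simp
  qed
  have P_outside: "P x = 0" if "x \<notin> F" for x
  proof (rule ccontr)
    assume "P x \<noteq> 0"
    then have "x \<in> paths N" "x ! 0 = x0" "x ! N = xN" using bridge_endpoints[OF P] by auto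
    moreover have "?B x \<noteq> 0" using support \<open>P x \<noteq> 0\<close> \<open>x \<in> paths N\<close> by blast
    then have "feasible E N x" by (auto simp: boltz_def split: if_splits)
    ultimately show False using that by (simp add: fpaths_def)
  qed
  have "kl_div F P ?q \<le> 0"
    using le relent_boltz_eq_kl_div[OF \<open>0 < T\<close> P P_outside] by simp
  moreover have "sum P F = sum ?q F"
    using sum_fpaths_bridge[where E = E, OF P P_outside] sum_gibbs[OF finite_F fpaths_nonempty] by simp
  ultimately have on_F: "P x = ?q x" if "x \<in> F" for x
    using kl_div_le_0_imp_eq[of F P ?q x] finite_F bridge_nonneg[OF P]
      gibbs_pos[OF finite_F fpaths_nonempty] that
    by simp
  show ?thesis
  proof
    fix x show "P x = ?q x" using on_F P_outside q_outside by (cases "x \<in> F") simp_all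
  qed
qed

lemma avglen_eq_mean_energy:
  assumes "\<And>x. x \<notin> F \<Longrightarrow> P x = 0"
  shows "avglen E l N P = ereal (mean_energy F len P)"
proof -
  have "avglen E l N P = (\<Sum>x\<in>F. plen E l N x * ereal (P x))"
    unfolding avglen_def using assms by (intro sum_paths_eq_sum_fpaths) simp
  also have "\<dots> = (\<Sum>x\<in>F. ereal (len x * P x))"
    by (intro sum.cong) (auto simp: plen_def fpaths_def)
  finally show ?thesis by (simp add: mean_energy_def)
qed

lemma bridge_finite_avglen_support:
  assumes P: "P \<in> bridge N x0 xN" and "avglen E l N P = ereal L" and "P x \<noteq> 0"
  shows "x \<in> F"
proof (rule ccontr)
  assume "x \<notin> F"
  moreover have "x \<in> paths N" "x ! 0 = x0" "x ! N = xN"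
    using bridge_endpoints[OF P \<open>P x \<noteq> 0\<close>] by auto
  ultimately have "plen E l N x * ereal (P x) = \<infinity>"
    using bridge_nonneg[OF P, of x] \<open>P x \<noteq> 0\<close> by (simp add: plen_def fpaths_def)
  then have "avglen E l N P = \<infinity>"
    unfolding avglen_def using \<open>x \<in> paths N\<close> finite_paths by (subst sum_Pinfty) auto
  then show False using assms(2) by simp
qed

lemma entropy_eq_entropy_on:
  assumes "\<And>x. x \<notin> F \<Longrightarrow> P x = 0"
  shows "entropy N P = entropy_on F P"
  unfolding entropy_def entropy_on_def using assms by (subst sum_paths_eq_sum_fpaths) auto


context
  fixes M :: "real \<Rightarrow> 'a list \<Rightarrow> real"
  assumes M: "\<And>T. 0 < T \<Longrightarrow> M T = gibbs F len (1 / T)"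
begin

lemma Mext_eq: "0 \<le> T \<Longrightarrow> Mext M T = gibbs_temp F len T"
  using Mext_eq_gibbs_temp[OF finite_F fpaths_nonempty M] .

lemma avglen_Mext: "0 \<le> T \<Longrightarrow> avglen E l N (Mext M T) = ereal (mean_energy F len (gibbs_temp F len T))"
  by (simp add: Mext_eq avglen_eq_mean_energy gibbs_temp_outside[OF finite_F fpaths_nonempty])

lemma ex1_temperature_avglen:
  assumes nonconst: "\<exists>y\<in>F. \<exists>z\<in>F. len y \<noteq> len z"
    and "Min (len ` F) \<le> L" "L \<le> (\<Sum>y\<in>F. len y) / real (card F)"
  shows "\<exists>!T. T \<in> {0..\<infinity>} \<and> avglen E l N (Mext M T) = ereal L"
proof (rule ex_ex1I)
  obtain T where "0 \<le> T" "mean_energy F len (gibbs_temp F len T) = L"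
    using mean_energy_gibbs_temp_surj[OF finite_F fpaths_nonempty] assms(2,3) by blast
  then show "\<exists>T. T \<in> {0..\<infinity>} \<and> avglen E l N (Mext M T) = ereal L"
    by (intro exI[of _ T]) (simp add: avglen_Mext)
next
  fix T\<^sub>1 T\<^sub>2
  assume "T\<^sub>1 \<in> {0..\<infinity>} \<and> avglen E l N (Mext M T\<^sub>1) = ereal L"
    and "T\<^sub>2 \<in> {0..\<infinity>} \<and> avglen E l N (Mext M T\<^sub>2) = ereal L"
  then show "T\<^sub>1 = T\<^sub>2"
    by (intro mean_energy_gibbs_temp_inj[OF finite_F fpaths_nonempty nonconst]) (auto simp: avglen_Mext)
qed

lemma entropy_le_Mext:
  assumes "0 \<le> T" and P: "P \<in> bridge N x0 xN"
    and avglen: "avglen E l N P = avglen E l N (Mext M T)"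
  shows "entropy N P \<le> entropy N (Mext M T)"
proof -
  have P_outside: "P x = 0" if "x \<notin> F" for x
    using bridge_finite_avglen_support[OF P] avglen_Mext[OF \<open>0 \<le> T\<close>] avglen that by metis
  have "mean_energy F len P = mean_energy F len (gibbs_temp F len T)"
    using avglen by (simp add: avglen_Mext[OF \<open>0 \<le> T\<close>] avglen_eq_mean_energy[OF P_outside])
  then have "entropy_on F P \<le> entropy_on F (gibbs_temp F len T)"
    using \<open>0 \<le> T\<close> bridge_nonneg[OF P] sum_fpaths_bridge[where E = E, OF P P_outside]
    by (intro entropy_on_le_gibbs_temp[OF finite_F fpaths_nonempty]) simp_all
  moreover have "entropy N (Mext M T) = entropy_on F (gibbs_temp F len T)"
    using \<open>0 \<le> T\<close> by (simp add: Mext_eq entropy_eq_entropy_on gibbs_temp_outside[OF finite_F fpaths_nonempty])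
  ultimately show ?thesis by (simp add: entropy_eq_entropy_on[OF P_outside])
qed

end

end

theorem theorem4:
  fixes E :: "('a::finite \<times> 'a) set" and l :: "'a \<Rightarrow> 'a \<Rightarrow> real"
    and N :: nat and x0 xN :: 'a and M :: "real \<Rightarrow> 'a list \<Rightarrow> real"
  assumes lnonneg: "\<And>i j. (i, j) \<in> E \<Longrightarrow> 0 \<le> l i j"
    and N1: "1 \<le> N"
    and nonempty: "fpaths E N x0 xN \<noteq> {}"
    and Mmin: "\<And>T. T > 0 \<Longrightarrow> M T \<in> bridge N x0 xN \<and>
        (\<forall>P\<in>bridge N x0 xN. relent N (M T) (boltz E l N T) \<le> relent N P (boltz E l N T))"
  shows
    "(\<forall>y\<in>fpaths E N x0 xN.
        rlen l N y > Min (rlen l N ` fpaths E N x0 xN) \<longrightarrow>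
        ((\<lambda>T. M T y) \<longlongrightarrow> 0) (at_right 0))
   \<and> (\<forall>y. ((\<lambda>T. M T y) \<longlongrightarrow>
        (if y \<in> fpaths E N x0 xN then 1 / real (card (fpaths E N x0 xN)) else 0)) at_top)
   \<and> (card (fpaths E N x0 xN) \<noteq> 1 \<and>
      (\<exists>y\<in>fpaths E N x0 xN. \<exists>z\<in>fpaths E N x0 xN. rlen l N y \<noteq> rlen l N z) \<longrightarrow>
      (\<forall>Lb::real. Min (rlen l N ` fpaths E N x0 xN) \<le> Lb \<and>
          Lb \<le> (\<Sum>y\<in>fpaths E N x0 xN. rlen l N y) / real (card (fpaths E N x0 xN)) \<longrightarrow>
        (\<exists>!T::ereal. T \<in> {0..\<infinity>} \<and> avglen E l N (Mext M T) = ereal Lb)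
        \<and> (\<forall>T::ereal. T \<in> {0..\<infinity>} \<and> avglen E l N (Mext M T) = ereal Lb \<longrightarrow>
             Mext M T \<in> bridge N x0 xN \<and>
             (\<forall>P\<in>bridge N x0 xN. avglen E l N P = ereal Lb \<longrightarrow>
                 entropy N P \<le> entropy N (Mext M T)))))"
proof -
  interpret path_bridge E l N x0 xN by unfold_locales (rule nonempty)
  note fin = finite_F and ne = fpaths_nonempty
  have M: "M T = gibbs F len (1 / T)" if "0 < T" for T
    using Mmin[OF that] by (intro relent_minimizer_eq_gibbs[OF that]) auto
  show ?thesis
  proof (intro conjI ballI allI impI)
    fix y assume "y \<in> F" "Min (len ` F) < len y"
    then show "((\<lambda>T. M T y) \<longlongrightarrow> 0) (at_right 0)"
      using tendsto_zero_temperature[OF fin ne M, of y] by (simp add: uniform_on_def minimizers_def)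
  next
    fix y show "((\<lambda>T. M T y) \<longlongrightarrow> (if y \<in> F then 1 / real (card F) else 0)) at_top"
      using tendsto_infinite_temperature[OF fin ne M, of y] by (simp add: uniform_on_def)
  next
    fix Lb assume "card F \<noteq> 1 \<and> (\<exists>y\<in>F. \<exists>z\<in>F. len y \<noteq> len z)"
      and "Min (len ` F) \<le> Lb \<and> Lb \<le> (\<Sum>y\<in>F. len y) / real (card F)"
    then show "\<exists>!T. T \<in> {0..\<infinity>} \<and> avglen E l N (Mext M T) = ereal Lb"
      using ex1_temperature_avglen[OF M] by blast
  next
    fix Lb T assume "T \<in> {0..\<infinity>} \<and> avglen E l N (Mext M T) = ereal Lb"
    then show "Mext M T \<in> bridge N x0 xN" using Mext_eq[OF M] gibbs_temp_in_bridge by simp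
  next
    fix Lb T P assume "T \<in> {0..\<infinity>} \<and> avglen E l N (Mext M T) = ereal Lb"
      and "P \<in> bridge N x0 xN" "avglen E l N P = ereal Lb"
    then show "entropy N P \<le> entropy N (Mext M T)" using entropy_le_Mext[OF M] by simp
  qed
qed

end
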